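(* Let $n \geq 2$ be an integer and let $$\mathbf{S} = \Big\{(x_1,\ldots,x_n) \in \mathbb{R}^n \;:\; \sum_{i=1}^n x_i = 1,\; x_i \geq 0 \text{ for } i=1,\ldots,n\Big\}.$$ Let $f$ be a real-valued function that is convex and continuous on $\mathbf{S}$ and differentiable on $\mathbf{S}$ (i.e. $f$ is the restriction to $\mathbf{S}$ of a function differentiable on an open neighborhood of $\mathbf{S}$ in $\mathbb{R}^n$). Fix constants $s>0$ and $\rho>1$ and put $\delta_k = s/\rho^k$ for $k \in \mathbb{N}$. Let $\mathbf{u}=(u_1,\ldots,u_n) \in \mathbf{S}$ with $u_j>0$ for all $j$. For $i=1,\ldots,n$ and $k\in\mathbb{N}$ define $\mathbf{u}_k^{(i+)}, \mathbf{u}_k^{(i-)} \in \mathbb{R}^n$ by $$\big(\mathbf{u}_k^{(i+)}\big)_i = u_i + \delta_k,\qquad \big(\mathbf{u}_k^{(i+)}\big)_j = u_j - \frac{\delta_k}{n-1}\ (j\neq i),$$ $$\big(\mathbf{u}_k^{(i-)}\big)_i = u_i - \delta_k,\qquad \big(\mathbf{u}_k^{(i-)}\big)_j = u_j + \frac{\delta_k}{n-1}\ (j\neq i).$$ Suppose that for every $k\in\mathbb{N}$ and every $i\in\{1,\ldots,n\}$ we have $f(\mathbf{u}) \leq f(\mathbf{u}_k^{(i+)})$ whenever $\mathbf{u}_k^{(i+)} \in \mathbf{S}$, and $f(\mathbf{u}) \leq f(\mathbf{u}_k^{(i-)})$ whenever $\mathbf{u}_k^{(i-)} \in \mathbf{S}$.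 Then $\mathbf{u}$ is a global minimizer of $f$ on $\mathbf{S}$, i.e. $f(\mathbf{u}) \leq f(\mathbf{x})$ for all $\mathbf{x}\in\mathbf{S}$.
   Context: $\mathbb{N}$ denotes the positive integers. The points $\mathbf{u}_k^{(i\pm)}$ are obtained from $\mathbf{u}$ by moving the $i$-th coordinate by $\pm\delta_k$ and compensating equally in the other $n-1$ coordinates so that the coordinate sum stays equal to $1$; they lie in $\mathbf{S}$ exactly when all their coordinates are nonnegative. *)

theory Defs
  imports "HOL-Analysis.Analysis"
begin

definition std_simplex :: "(real ^ 'n) set" where
  "std_simplex = {x. (\<Sum>i\<in>UNIV. x $ i) = 1 \<and> (\<forall>i. 0 \<le> x $ i)}"

definition differentiable_on_closed_set :: "((real ^ 'n) \<Rightarrow> real) \<Rightarrow> (real ^ 'n) set \<Rightarrow> bool" where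
  "differentiable_on_closed_set f S \<longleftrightarrow>
     (\<exists>U g. open U \<and> S \<subseteq> U \<and> (\<forall>x\<in>U. g differentiable (at x)) \<and> (\<forall>x\<in>S. g x = f x))"

definition delta :: "real \<Rightarrow> real \<Rightarrow> nat \<Rightarrow> real" where
  "delta s \<rho> k = s / \<rho> ^ k"

definition u_plus :: "real ^ 'n \<Rightarrow> real \<Rightarrow> 'n \<Rightarrow> real ^ 'n" where
  "u_plus u d i = (\<chi> j. if j = i then u $ i + d else u $ j - d / (real CARD('n) - 1))"

definition u_minus :: "real ^ 'n \<Rightarrow> real \<Rightarrow> 'n \<Rightarrow> real ^ 'n" where
  "u_minus u d i = (\<chi> j. if j = i then u $ i - d else u $ j + d / (real CARD('n) - 1))"

end

theory Submission imports Defs begin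

text \<open>The test points are \<open>u \<plusminus> \<delta>\<^sub>k d\<^sub>i\<close> with \<open>d\<^sub>i = simplex_direction i\<close>. Since all
  coordinates of \<open>u\<close> are positive, these points lie in the simplex once \<open>\<delta>\<^sub>k\<close> is small, so the
  hypothesis makes the directional derivatives of a differentiable extension \<open>g\<close> of \<open>f\<close> at \<open>u\<close>
  nonnegative in both directions \<open>\<plusminus>d\<^sub>i\<close>; hence they vanish. The \<open>d\<^sub>i\<close> span the hyperplane of
  zero-sum vectors, which contains every \<open>x - u\<close> with \<open>x\<close> in the simplex, so \<open>g' u (x - u) = 0\<close>,
  and convexity of \<open>f\<close> on the segment \<open>[u, x]\<close> gives \<open>f u \<le> f x\<close>.\<close>

lemma has_derivative_along_line:
  fixes g :: "'a::real_normed_vector \<Rightarrow> real"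
  assumes "(g has_derivative D) (at u)"
  shows "((\<lambda>t. g (u + t *\<^sub>R v)) has_real_derivative D v) (at 0)"
proof -
  have line: "((\<lambda>t::real. u + t *\<^sub>R v) has_derivative (\<lambda>t. t *\<^sub>R v)) (at 0)"
    by (auto intro!: derivative_eq_intros)
  have "((\<lambda>t. g (u + t *\<^sub>R v)) has_derivative (\<lambda>t. D (t *\<^sub>R v))) (at 0)"
    using has_derivative_compose[OF line, of g D] assms by (simp add: o_def)
  moreover have "(\<lambda>t. D (t *\<^sub>R v)) = (\<lambda>t. D v * t)"
    using has_derivative_linear[OF assms] by (auto simp: linear_scale)
  ultimately show ?thesis by (simp add: has_field_derivative_def)
qed

lemma difference_quotient_along_line_tendsto:
  fixes g :: "'a::real_normed_vector \<Rightarrow> real"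
  assumes "(g has_derivative D) (at u)"
  shows "((\<lambda>h. (g (u + h *\<^sub>R v) - g u) / h) \<longlongrightarrow> D v) (at 0)"
  using has_derivative_along_line[OF assms, of v] by (simp add: DERIV_def)

lemma derivative_nonneg_if_le_along_null_sequence:
  fixes g :: "'a::real_normed_vector \<Rightarrow> real"
  assumes "(g has_derivative D) (at u)" and "t \<longlonglongrightarrow> 0"
    and "eventually (\<lambda>k. 0 < t k \<and> g u \<le> g (u + t k *\<^sub>R v)) sequentially"
  shows "0 \<le> D v"
proof -
  have "filterlim t (at 0) sequentially"
    using assms(2,3) by (auto simp: filterlim_at elim: eventually_mono)
  then have "((\<lambda>k. (g (u + t k *\<^sub>R v) - g u) / t k) \<longlongrightarrow> D v) sequentially"
    using filterlim_compose[OF difference_quotient_along_line_tendsto[OF assms(1)]] by blast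
  moreover have "eventually (\<lambda>k. 0 \<le> (g (u + t k *\<^sub>R v) - g u) / t k) sequentially"
    using assms(3) by (auto elim: eventually_mono)
  ultimately show ?thesis by (rule tendsto_lowerbound) simp
qed

text \<open>By convexity of \<open>f\<close>, the difference quotients of \<open>g\<close> towards \<open>x\<close> are bounded by \<open>f x - f u\<close>.\<close>
lemma convex_on_le_if_derivative_nonneg:
  fixes f g :: "'a::real_normed_vector \<Rightarrow> real"
  assumes "convex_on S f" and "u \<in> S" and "x \<in> S" and "\<forall>y\<in>S. g y = f y"
    and "(g has_derivative D) (at u)" and "0 \<le> D (x - u)"
  shows "f u \<le> f x"
proof -
  have "convex S" using assms(1) by (simp add: convex_on_def)
  have chord: "(g (u + h *\<^sub>R (x - u)) - g u) / h \<le> f x - f u" if "0 < h" "h < 1" for h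
  proof -
    have pt: "u + h *\<^sub>R (x - u) = (1 - h) *\<^sub>R u + h *\<^sub>R x" by (simp add: algebra_simps)
    have "(1 - h) *\<^sub>R u + h *\<^sub>R x \<in> S"
      using \<open>convex S\<close> assms(2,3) that by (intro convexD) auto
    moreover have "f ((1 - h) *\<^sub>R u + h *\<^sub>R x) \<le> (1 - h) * f u + h * f x"
      using convex_onD[OF assms(1)] assms(2,3) that by simp
    ultimately have "g (u + h *\<^sub>R (x - u)) - g u \<le> h * (f x - f u)"
      using assms(2,4) by (simp add: pt algebra_simps)
    then show ?thesis using \<open>0 < h\<close> by (simp add: divide_le_eq mult.commute)
  qed
  have "((\<lambda>h. (g (u + h *\<^sub>R (x - u)) - g u) / h) \<longlongrightarrow> D (x - u)) (at_right 0)"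
    using difference_quotient_along_line_tendsto[OF assms(5)]
    by (rule tendsto_mono[rotated]) (rule at_le, simp)
  moreover have "eventually (\<lambda>h. (g (u + h *\<^sub>R (x - u)) - g u) / h \<le> f x - f u) (at_right 0)"
    using eventually_at_right_real[OF zero_less_one] by eventually_elim (use chord in auto)
  ultimately have "D (x - u) \<le> f x - f u" by (rule tendsto_upperbound) simp
  with assms(6) show ?thesis by simp
qed

definition simplex_direction :: "'n::finite \<Rightarrow> real ^ 'n" where
  "simplex_direction i = (\<chi> j. if j = i then 1 else - 1 / (real CARD('n) - 1))"

lemma u_plus_eq: "u_plus u d i = u + d *\<^sub>R simplex_direction i"
  unfolding u_plus_def simplex_direction_def by (simp add: vec_eq_iff)

lemma u_minus_eq: "u_minus u d i = u + d *\<^sub>R - simplex_direction i"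
  unfolding u_minus_def simplex_direction_def by (simp add: vec_eq_iff)

lemma sum_if_eq:
  fixes a :: "'n::finite \<Rightarrow> real"
  shows "(\<Sum>j\<in>UNIV. (if j = i then 1 else c) * a j) = c * sum a UNIV + (1 - c) * a i"
proof -
  have "(\<Sum>j\<in>UNIV. (if j = i then 1 else c) * a j)
      = (\<Sum>j\<in>UNIV. c * a j + (if j = i then (1 - c) * a j else 0))"
    by (rule sum.cong) (auto simp: algebra_simps)
  then show ?thesis by (simp add: sum.distrib sum_distrib_left)
qed

lemma sum_simplex_direction:
  assumes "CARD('n::finite) \<ge> 2"
  shows "(\<Sum>j\<in>UNIV. simplex_direction (i::'n) $ j) = 0"
  using sum_if_eq[of i "- 1 / (real CARD('n) - 1)" "\<lambda>_. 1"] assms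
  by (simp add: simplex_direction_def field_simps)

lemma abs_simplex_direction_le_1:
  assumes "CARD('n::finite) \<ge> 2"
  shows "\<bar>simplex_direction (i::'n) $ j\<bar> \<le> 1"
  using assms by (simp add: simplex_direction_def field_simps)

lemma add_simplex_direction_in_std_simplex:
  fixes u :: "real ^ 'n"
  assumes "CARD('n) \<ge> 2" and "u \<in> std_simplex" and "\<forall>j. \<bar>t\<bar> \<le> u $ j"
    and "w = simplex_direction i \<or> w = - simplex_direction i"
  shows "u + t *\<^sub>R w \<in> std_simplex"
proof -
  have "(\<Sum>j\<in>UNIV. w $ j) = 0"
    using assms(4) sum_simplex_direction[OF assms(1)] by (auto simp: sum_negf)
  then have "(\<Sum>j\<in>UNIV. (u + t *\<^sub>R w) $ j) = 1"
    using assms(2) by (simp add: std_simplex_def sum.distrib flip: sum_distrib_left)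
  moreover have "0 \<le> (u + t *\<^sub>R w) $ j" for j
  proof -
    have "\<bar>t * w $ j\<bar> \<le> \<bar>t\<bar>"
      using abs_simplex_direction_le_1[OF assms(1)] assms(4)
      by (auto simp: abs_mult intro!: mult_left_le)
    moreover have "\<bar>t\<bar> \<le> u $ j" using assms(3) by blast
    ultimately show ?thesis using abs_ge_minus_self[of "t * w $ j"] by simp
  qed
  ultimately show ?thesis by (simp add: std_simplex_def)
qed

text \<open>The directions span the hyperplane of zero-sum vectors:
  \<open>\<Sum>\<^sub>i w\<^sub>i \<cdot> simplex_direction i = (n / (n - 1)) \<cdot> w\<close> whenever \<open>\<Sum>\<^sub>i w\<^sub>i = 0\<close>.\<close>
lemma linear_vanishes_on_zero_sum:
  fixes D :: "real ^ 'n \<Rightarrow> real"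
  assumes "CARD('n) \<ge> 2" and "linear D" and "\<forall>i. D (simplex_direction i) = 0"
    and "(\<Sum>j\<in>UNIV. w $ j) = 0"
  shows "D w = 0"
proof -
  define c :: real where "c = - 1 / (real CARD('n) - 1)"
  have "(\<Sum>i\<in>UNIV. w $ i *\<^sub>R simplex_direction i) = (1 - c) *\<^sub>R w"
    unfolding vec_eq_iff
  proof
    fix j
    have "(\<Sum>i\<in>UNIV. w $ i * simplex_direction i $ j)
        = (\<Sum>i\<in>UNIV. (if i = j then 1 else c) * w $ i)"
      by (rule sum.cong) (auto simp: simplex_direction_def c_def)
    then show "(\<Sum>i\<in>UNIV. w $ i *\<^sub>R simplex_direction i) $ j = ((1 - c) *\<^sub>R w) $ j"
      using sum_if_eq[of j c "\<lambda>i. w $ i"] assms(4) by (simp add: sum_component)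
  qed
  moreover have "D (\<Sum>i\<in>UNIV. w $ i *\<^sub>R simplex_direction i) = 0"
    using assms(3) by (simp add: linear_sum[OF assms(2)] linear_scale[OF assms(2)])
  ultimately have "(1 - c) * D w = 0" by (simp add: linear_scale[OF assms(2)])
  moreover have "1 - c \<noteq> 0" using assms(1) by (simp add: c_def field_simps)
  ultimately show ?thesis by simp
qed

lemma derivative_simplex_direction_eq_0:
  fixes u :: "real ^ 'n" and g :: "real ^ 'n \<Rightarrow> real"
  assumes "CARD('n) \<ge> 2" and "u \<in> std_simplex" and "\<forall>j. 0 < u $ j"
    and D: "(g has_derivative D) (at u)" and t_null: "t \<longlonglongrightarrow> 0" and "\<forall>k. 0 < t k"
    and "eventually (\<lambda>k. \<forall>w\<in>{simplex_direction i, - simplex_direction i}.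
           u + t k *\<^sub>R w \<in> std_simplex \<longrightarrow> g u \<le> g (u + t k *\<^sub>R w)) sequentially"
  shows "D (simplex_direction i) = 0"
proof -
  define m where "m = Min (range (\<lambda>j. u $ j))"
  have "0 < m" and m_le: "\<forall>j. m \<le> u $ j" using assms(3) by (auto simp: m_def)
  have nonneg: "0 \<le> D w" if w: "w \<in> {simplex_direction i, - simplex_direction i}" for w
  proof (rule derivative_nonneg_if_le_along_null_sequence[OF D t_null])
    show "eventually (\<lambda>k. 0 < t k \<and> g u \<le> g (u + t k *\<^sub>R w)) sequentially"
      using order_tendstoD(2)[OF t_null \<open>0 < m\<close>] assms(7)
    proof eventually_elim
      case (elim k)
      with \<open>\<forall>k. 0 < t k\<close> m_le have "\<forall>j. \<bar>t k\<bar> \<le> u $ j"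
        by (simp add: abs_of_pos) (meson less_imp_le order_trans)
      then have "u + t k *\<^sub>R w \<in> std_simplex"
        using add_simplex_direction_in_std_simplex[OF assms(1,2)] w by blast
      with elim w \<open>\<forall>k. 0 < t k\<close> show ?case by blast
    qed
  qed
  show ?thesis
    using nonneg[of "simplex_direction i"] nonneg[of "- simplex_direction i"]
      linear_neg[OF has_derivative_linear[OF D], of "simplex_direction i"] by simp
qed

theorem theorem1:
  fixes f :: "real ^ 'n \<Rightarrow> real" and s \<rho> :: real and u :: "real ^ 'n"
  assumes "CARD('n) \<ge> 2"
    and "convex_on std_simplex f"
    and "continuous_on std_simplex f"
    and "differentiable_on_closed_set f std_simplex"
    and "s > 0" and "\<rho> > 1"
    and "u \<in> std_simplex" and "\<forall>j. u $ j > 0"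
    and "\<forall>k::nat. k \<ge> 1 \<longrightarrow> (\<forall>i.
           (u_plus u (delta s \<rho> k) i \<in> std_simplex \<longrightarrow> f u \<le> f (u_plus u (delta s \<rho> k) i)) \<and>
           (u_minus u (delta s \<rho> k) i \<in> std_simplex \<longrightarrow> f u \<le> f (u_minus u (delta s \<rho> k) i)))"
  shows "\<forall>x\<in>std_simplex. f u \<le> f x"
proof
  obtain U g where "open U" "std_simplex \<subseteq> U" "\<forall>x\<in>U. g differentiable (at x)"
    and g_eq_f: "\<forall>x\<in>std_simplex. g x = f x"
    using assms(4) unfolding differentiable_on_closed_set_def by blast
  with assms(7) obtain D where D: "(g has_derivative D) (at u)"
    unfolding differentiable_def by blast
  have delta_null: "delta s \<rho> \<longlonglongrightarrow> 0"
    unfolding delta_def by (rule LIMSEQ_divide_realpow_zero[OF assms(6)])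
  have delta_pos: "\<forall>k. 0 < delta s \<rho> k"
    using assms(5,6) by (simp add: delta_def)
  have "D (simplex_direction i) = 0" for i
  proof (rule derivative_simplex_direction_eq_0[OF assms(1,7,8) D delta_null delta_pos])
    show "eventually (\<lambda>k. \<forall>w\<in>{simplex_direction i, - simplex_direction i}.
        u + delta s \<rho> k *\<^sub>R w \<in> std_simplex \<longrightarrow> g u \<le> g (u + delta s \<rho> k *\<^sub>R w)) sequentially"
      using eventually_ge_at_top[of 1]
      by eventually_elim (use assms(7,9) g_eq_f in \<open>simp add: u_plus_eq u_minus_eq\<close>)
  qed
  fix x :: "real ^ 'n" assume "x \<in> std_simplex"
  with assms(7) have "(\<Sum>j\<in>UNIV. (x - u) $ j) = 0"
    by (simp add: std_simplex_def sum_subtractf)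
  then have "D (x - u) = 0"
    using linear_vanishes_on_zero_sum[OF assms(1) has_derivative_linear[OF D]]
      \<open>\<And>i. D (simplex_direction i) = 0\<close> by blast
  then show "f u \<le> f x"
    using convex_on_le_if_derivative_nonneg[OF assms(2,7) \<open>x \<in> std_simplex\<close> g_eq_f D] by simp
qed

end
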